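(* Let $2<\gamma<3$ and let $k=k(n)$ satisfy $k=o(n)$. Then, as $n\to\infty$, \[h_n-\sum_{i=k}^{n-1}\left(\frac{i/n}{1-i/n}-\log\left(1+\frac{i/n}{1-i/n}\right)\right)\left(\frac ni\right)^{\gamma}\cdot\frac1n=\sum_{i=1}^{\infty}\left(\frac1i-\frac{i}{(i+1)(i+2-\gamma)}\right)+o(1),\] where $h_n=\sum_{j=1}^n 1/j$. *)

theory Defs
  imports "HOL-Analysis.Analysis" "HOL-Library.Landau_Symbols"
begin

end

theory Submission
  imports Defs
begin

text \<open>
  Write \<open>x = i/n\<close>, \<open>a = 2 - \<gamma>\<close> (so \<open>-1 < a < 0\<close>) and \<open>T\<close> for the summand, \<open>log_excess \<gamma>\<close>.
  Since \<open>h_n = 1/n + (1/n) \<Sum>_{0<i<n} 1/(1 - x)\<close>, the expression is, up to \<open>1/n\<close> and the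
  terms with \<open>i < k\<close>, the average of \<open>1/(1 - x) - T(x)\<close> over the points \<open>i/n\<close>, and
  \<open>1/(1 - x) - T(x) = \<psi>(x) - \<phi>(x)\<close> with \<open>\<psi> = log_tail a = \<Sum>_m x^(m+a)/(m+2)\<close> (from the
  series of \<open>-ln (1 - x)\<close>) and \<open>\<phi> = geom_diff a = (x^a - 1)/(1 - x) = \<Sum>_m (x^(m+a) - x^m)\<close>.
  Averaging a power \<open>x^p\<close> over the points \<open>i/n\<close> gives the Riemann sum \<open>powr_riemann_sum p n\<close>, which never
  exceeds \<open>1/(p+1)\<close> and tends to it. So both series have remainders after \<open>M\<close> terms
  bounded by \<open>1/(M+a+1)\<close> uniformly in \<open>n\<close>, limit and series can be exchanged, and the limit
  is \<open>\<Sum>_m (1/((m+a+1)(m+2)) - 1/(m+a+1) + 1/(m+1))\<close>, the stated constant. The terms with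
  \<open>i < k\<close> are negligible: \<open>0 \<le> T(x) \<le> 2x^a\<close> for \<open>x \<le> 1/2\<close>, so they contribute
  \<open>O((k/n)^(a+1))\<close>.
\<close>

section \<open>Sums and Riemann sums of powers\<close>

lemma mono_deriv_diff_bounds:
  fixes f f' :: "real \<Rightarrow> real"
  assumes "u \<le> v"
    and deriv: "\<And>x. u \<le> x \<Longrightarrow> x \<le> v \<Longrightarrow> (f has_real_derivative f' x) (at x)"
    and mono: "\<And>x y. u \<le> x \<Longrightarrow> x \<le> y \<Longrightarrow> y \<le> v \<Longrightarrow> f' x \<le> f' y"
  shows "f' u * (v - u) \<le> f v - f u" and "f v - f u \<le> f' v * (v - u)"
proof -
  have "f' u * (v - u) \<le> f v - f u \<and> f v - f u \<le> f' v * (v - u)"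
  proof (cases "u = v")
    case False
    then obtain z where "u < z" "z < v" "f v - f u = (v - u) * f' z"
      using MVT2[of u v f f'] deriv \<open>u \<le> v\<close> by force
    then show ?thesis
      using mono[of u z] mono[of z v] by (simp add: mult.commute mult_right_mono)
  qed simp
  then show "f' u * (v - u) \<le> f v - f u" and "f v - f u \<le> f' v * (v - u)"
    by auto
qed

lemma powr_succ_diff_bounds:
  fixes p u :: real
  assumes "0 < u"
  shows "0 \<le> p \<Longrightarrow> (p + 1) * u powr p \<le> (u + 1) powr (p + 1) - u powr (p + 1)"
    and "0 \<le> p \<Longrightarrow> (u + 1) powr (p + 1) - u powr (p + 1) \<le> (p + 1) * (u + 1) powr p"
    and "-1 \<le> p \<Longrightarrow> p \<le> 0 \<Longrightarrow> (u + 1) powr (p + 1) - u powr (p + 1) \<le> (p + 1) * u powr p"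
    and "-1 \<le> p \<Longrightarrow> p \<le> 0 \<Longrightarrow> (p + 1) * (u + 1) powr p \<le> (u + 1) powr (p + 1) - u powr (p + 1)"
proof -
  \<comment> \<open>With \<open>c = -1\<close> the decreasing derivative for \<open>p \<le> 0\<close> becomes an increasing one.\<close>
  have bounds: "c * ((p + 1) * u powr p) \<le> c * ((u + 1) powr (p + 1) - u powr (p + 1))
      \<and> c * ((u + 1) powr (p + 1) - u powr (p + 1)) \<le> c * ((p + 1) * (u + 1) powr p)"
    if mono: "\<And>x y. u \<le> x \<Longrightarrow> x \<le> y \<Longrightarrow> c * ((p + 1) * x powr p) \<le> c * ((p + 1) * y powr p)"
    for c
  proof -
    have deriv: "((\<lambda>x. c * x powr (p + 1)) has_real_derivative c * ((p + 1) * x powr p)) (at x)"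
      if "u \<le> x" for x
      using DERIV_cmult[OF has_real_derivative_powr[of x "p + 1"], of c] that assms by simp
    show ?thesis
      using mono_deriv_diff_bounds[of u "u + 1", OF _ deriv mono] by (simp add: right_diff_distrib)
  qed
  have incr: "1 * ((p + 1) * x powr p) \<le> 1 * ((p + 1) * y powr p)"
    if "0 \<le> p" "u \<le> x" "x \<le> y" for x y
    using that assms by (simp add: mult_left_mono powr_mono2)
  have decr: "-1 * ((p + 1) * x powr p) \<le> -1 * ((p + 1) * y powr p)"
    if "-1 \<le> p" "p \<le> 0" "u \<le> x" "x \<le> y" for x y
    using that assms by (simp add: mult_left_mono powr_mono2')
  show "0 \<le> p \<Longrightarrow> (p + 1) * u powr p \<le> (u + 1) powr (p + 1) - u powr (p + 1)"
    and "0 \<le> p \<Longrightarrow> (u + 1) powr (p + 1) - u powr (p + 1) \<le> (p + 1) * (u + 1) powr p"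
    using bounds[of 1, OF incr] by simp_all
  show "-1 \<le> p \<Longrightarrow> p \<le> 0 \<Longrightarrow> (u + 1) powr (p + 1) - u powr (p + 1) \<le> (p + 1) * u powr p"
    and "-1 \<le> p \<Longrightarrow> p \<le> 0 \<Longrightarrow> (p + 1) * (u + 1) powr p \<le> (u + 1) powr (p + 1) - u powr (p + 1)"
    using bounds[of "-1", OF decr] by simp_all
qed

lemma sum_powr_upper_bound:
  fixes p :: real
  assumes "-1 < p"
  shows "(p + 1) * (\<Sum>i\<in>{1..<K}. real i powr p) \<le> real K powr (p + 1)"
proof -
  define F where "F i = real i powr (p + 1)" for i
  show ?thesis
  proof (cases "0 \<le> p")
    case True
    have "(p + 1) * real i powr p \<le> F (Suc i) - F i" for i
      using powr_succ_diff_bounds(1)[of "real i" p] True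
      by (cases "i = 0") (simp_all add: F_def add.commute)
    then have "(p + 1) * (\<Sum>i\<in>{0..<K}. real i powr p) \<le> (\<Sum>i\<in>{0..<K}. F (Suc i) - F i)"
      unfolding sum_distrib_left by (intro sum_mono) auto
    also have "\<dots> = F K"
      using sum_Suc_diff'[of 0 K F] by (simp add: F_def)
    finally show ?thesis
      using sum_shift_lb_Suc0_0_upt[of "\<lambda>i. real i powr p"] by (simp add: F_def)
  next
    case False
    have "(p + 1) * real i powr p \<le> F i - F (i - 1)" if "1 \<le> i" for i
    proof (cases "i = 1")
      case False
      then show ?thesis
        using powr_succ_diff_bounds(4)[of "real (i - 1)" p] that assms \<open>\<not> 0 \<le> p\<close>
        by (simp add: F_def)
    qed (use False in \<open>simp add: F_def\<close>)
    then have "(p + 1) * (\<Sum>i\<in>{1..K}. real i powr p) \<le> (\<Sum>i\<in>{1..K}. F i - F (i - 1))"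
      unfolding sum_distrib_left by (intro sum_mono) auto
    also have "\<dots> = F K"
      using sum_telescope''[of 0 K F] by (simp add: F_def)
    finally have "(p + 1) * (\<Sum>i\<in>{1..K}. real i powr p) \<le> real K powr (p + 1)"
      by (simp add: F_def)
    moreover have "(p + 1) * (\<Sum>i\<in>{1..<K}. real i powr p) \<le> (p + 1) * (\<Sum>i\<in>{1..K}. real i powr p)"
      using assms by (intro mult_left_mono sum_mono2) auto
    ultimately show ?thesis
      by linarith
  qed
qed

lemma sum_powr_lower_bound:
  fixes p :: real
  assumes "-1 < p"
  shows "real K powr (p + 1) - 1 \<le> (p + 1) * (\<Sum>i\<in>{1..K}. real i powr p)"
proof -
  define F where "F i = real i powr (p + 1)" for i
  show ?thesis
  proof (cases "0 \<le> p")
    case True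
    have "F i - F (i - 1) \<le> (p + 1) * real i powr p" if "1 \<le> i" for i
    proof (cases "i = 1")
      case False
      then show ?thesis
        using powr_succ_diff_bounds(2)[of "real (i - 1)" p] that True
        by (simp add: F_def)
    qed (use True in \<open>simp add: F_def\<close>)
    then have "(\<Sum>i\<in>{1..K}. F i - F (i - 1)) \<le> (p + 1) * (\<Sum>i\<in>{1..K}. real i powr p)"
      unfolding sum_distrib_left by (intro sum_mono) auto
    moreover have "(\<Sum>i\<in>{1..K}. F i - F (i - 1)) = F K"
      using sum_telescope''[of 0 K F] by (simp add: F_def)
    ultimately show ?thesis
      by (simp add: F_def)
  next
    case False
    have "F (Suc i) - F i \<le> (p + 1) * real i powr p" if "1 \<le> i" for i
      using powr_succ_diff_bounds(3)[of "real i" p] that assms False by (simp add: F_def add.commute)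
    then have "(\<Sum>i = 1..K. F (Suc i) - F i) \<le> (p + 1) * (\<Sum>i\<in>{1..K}. real i powr p)"
      unfolding sum_distrib_left by (intro sum_mono) auto
    moreover have "(\<Sum>i = 1..K. F (Suc i) - F i) = F (Suc K) - 1"
      using sum_Suc_diff[of 1 K F] by (simp add: F_def)
    moreover have "F K \<le> F (Suc K)"
      using assms by (simp add: F_def powr_mono2)
    ultimately show ?thesis
      by (simp add: F_def)
  qed
qed

lemma partial_riemann_sum_powr_le:
  fixes p :: real
  assumes "-1 < p"
  shows "(\<Sum>i\<in>{1..<K}. (real i / real n) powr p) / real n \<le> (real K / real n) powr (p + 1) / (p + 1)"
proof (cases "n = 0")
  case False
  have "(\<Sum>i\<in>{1..<K}. (real i / real n) powr p) / real n
      = (\<Sum>i\<in>{1..<K}. real i powr p) / real n powr (p + 1)"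
    using False by (simp add: powr_divide powr_add sum_divide_distrib)
  also have "\<dots> \<le> real K powr (p + 1) / (p + 1) / real n powr (p + 1)"
    using sum_powr_upper_bound[OF assms, of K] assms
    by (intro divide_right_mono) (simp_all add: pos_le_divide_eq mult.commute)
  also have "\<dots> = (real K / real n) powr (p + 1) / (p + 1)"
    by (simp add: powr_divide)
  finally show ?thesis .
qed simp

definition powr_riemann_sum :: "real \<Rightarrow> nat \<Rightarrow> real" where
  "powr_riemann_sum p n = (\<Sum>i\<in>{1..<n}. (real i / real n) powr p) / real n"

lemma powr_riemann_sum_nonneg: "0 \<le> powr_riemann_sum p n"
  unfolding powr_riemann_sum_def by (intro divide_nonneg_nonneg sum_nonneg) auto

lemma powr_riemann_sum_le:
  assumes "-1 < p"
  shows "powr_riemann_sum p n \<le> 1 / (p + 1)"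
  using partial_riemann_sum_powr_le[OF assms, of n n] assms
  by (cases "n = 0") (simp_all add: powr_riemann_sum_def)

lemma powr_riemann_sum_lower_bound:
  assumes "-1 < p" "0 < n"
  shows "(1 - real n powr -(p + 1)) / (p + 1) - 1 / real n \<le> powr_riemann_sum p n"
proof -
  define S where "S = (\<Sum>i\<in>{1..<n}. real i powr p)"
  define N where "N = real n powr (p + 1)"
  have N: "0 < N" "real n powr p = N / real n" "real n powr -(p + 1) = 1 / N"
    using assms by (simp_all add: N_def powr_add powr_minus_divide del: minus_add_distrib)
  have "(\<Sum>i\<in>{1..n}. real i powr p) = S + real n powr p"
    using assms by (simp add: S_def atLeastLessThanSuc_atLeastAtMost[symmetric] sum.atLeastLessThan_Suc)
  then have bound: "N - 1 - (p + 1) * real n powr p \<le> (p + 1) * S"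
    using sum_powr_lower_bound[OF assms(1), of n] by (simp add: N_def algebra_simps)
  have "(1 - real n powr -(p + 1)) / (p + 1) - 1 / real n = (N - 1 - (p + 1) * real n powr p) / ((p + 1) * N)"
  proof -
    have "p + 1 \<noteq> 0" "N \<noteq> 0" "real n \<noteq> 0" using N(1) assms by auto
    then show ?thesis unfolding N(2,3) by (simp add: divide_simps)
  qed
  also have "\<dots> \<le> (p + 1) * S / ((p + 1) * N)"
    using bound N assms by (intro divide_right_mono) auto
  also have "\<dots> = powr_riemann_sum p n"
    using assms by (simp add: S_def N_def powr_riemann_sum_def powr_divide powr_add sum_divide_distrib)
  finally show ?thesis .
qed

lemma powr_riemann_sum_tendsto:
  assumes "-1 < p"
  shows "(\<lambda>n. powr_riemann_sum p n) \<longlonglongrightarrow> 1 / (p + 1)"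
proof (rule tendsto_sandwich)
  have "(\<lambda>n. (1 - real n powr -(p + 1)) / (p + 1) - 1 / real n) \<longlonglongrightarrow> (1 - 0) / (p + 1) - 0"
    using assms by (intro tendsto_intros tendsto_neg_powr filterlim_real_sequentially lim_inverse_n') auto
  then show "(\<lambda>n. (1 - real n powr -(p + 1)) / (p + 1) - 1 / real n) \<longlonglongrightarrow> 1 / (p + 1)"
    by simp
  show "eventually (\<lambda>n. (1 - real n powr -(p + 1)) / (p + 1) - 1 / real n \<le> powr_riemann_sum p n) sequentially"
    using eventually_gt_at_top[of 0] by eventually_elim (rule powr_riemann_sum_lower_bound[OF assms])
  show "eventually (\<lambda>n. powr_riemann_sum p n \<le> 1 / (p + 1)) sequentially"
    using powr_riemann_sum_le[OF assms] by simp
qed simp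

section \<open>Exchanging a limit with a series\<close>

lemma summable_uniform_remainder:
  fixes f :: "nat \<Rightarrow> nat \<Rightarrow> 'a::banach" and s :: "nat \<Rightarrow> 'a" and e :: "nat \<Rightarrow> real"
  assumes lim: "\<And>m. (\<lambda>n. f n m) \<longlonglongrightarrow> l m"
    and remainder: "\<And>n M. norm (s n - (\<Sum>m<M. f n m)) \<le> e M"
    and e: "e \<longlonglongrightarrow> 0"
  shows "summable l" and "norm (suminf l - (\<Sum>m<M. l m)) \<le> e M"
proof -
  define L where "L = (\<lambda>M. \<Sum>m<M. l m)"
  have L_dist: "norm (L M - L M') \<le> e M + e M'" for M M'
  proof (rule tendsto_le[OF trivial_limit_sequentially tendsto_const])
    show "(\<lambda>n. norm ((\<Sum>m<M. f n m) - (\<Sum>m<M'. f n m))) \<longlonglongrightarrow> norm (L M - L M')"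
      unfolding L_def by (intro tendsto_intros lim)
    have "norm ((\<Sum>m<M. f n m) - (\<Sum>m<M'. f n m)) \<le> e M + e M'" for n
      using norm_triangle_ineq4[of "s n - (\<Sum>m<M'. f n m)" "s n - (\<Sum>m<M. f n m)"]
        remainder[of n M] remainder[of n M'] by simp
    then show "eventually (\<lambda>n. norm ((\<Sum>m<M. f n m) - (\<Sum>m<M'. f n m)) \<le> e M + e M') sequentially"
      by simp
  qed
  have "Cauchy L"
  proof (rule metric_CauchyI)
    fix r :: real assume "0 < r"
    then obtain N where N: "\<And>M. N \<le> M \<Longrightarrow> e M < r / 2"
      using order_tendstoD(2)[OF e, of "r / 2"] by (auto simp: eventually_sequentially)
    have "dist (L M) (L M') < r" if "N \<le> M" "N \<le> M'" for M M'
      using L_dist[of M M'] N[OF that(1)] N[OF that(2)] by (simp add: dist_norm)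
    then show "\<exists>N. \<forall>M\<ge>N. \<forall>M'\<ge>N. dist (L M) (L M') < r"
      by blast
  qed
  then show "summable l"
    by (simp add: summable_iff_convergent L_def Cauchy_convergent_iff)
  then have L_lim: "L \<longlonglongrightarrow> suminf l"
    unfolding L_def by (rule summable_LIMSEQ)
  show "norm (suminf l - (\<Sum>m<M. l m)) \<le> e M"
  proof (rule tendsto_le[OF trivial_limit_sequentially])
    show "(\<lambda>M'. e M' + e M) \<longlonglongrightarrow> e M"
      using tendsto_add[OF e tendsto_const, of "e M"] by simp
    show "(\<lambda>M'. norm (L M' - L M)) \<longlonglongrightarrow> norm (suminf l - (\<Sum>m<M. l m))"
      unfolding L_def by (intro tendsto_intros L_lim[unfolded L_def])
  qed (simp add: L_dist)
qed

text \<open>A form of Tannery's theorem in which a bound on the remainders, uniform in \<open>n\<close>,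
  replaces a summable dominating sequence.\<close>

lemma tendsto_suminf_uniform_remainder:
  fixes f :: "nat \<Rightarrow> nat \<Rightarrow> 'a::banach" and s :: "nat \<Rightarrow> 'a" and e :: "nat \<Rightarrow> real"
  assumes lim: "\<And>m. (\<lambda>n. f n m) \<longlonglongrightarrow> l m"
    and remainder: "\<And>n M. norm (s n - (\<Sum>m<M. f n m)) \<le> e M"
    and e: "e \<longlonglongrightarrow> 0"
  shows "s \<longlonglongrightarrow> suminf l"
proof (rule tendstoI)
  fix r :: real assume "0 < r"
  then obtain M where M: "e M < r / 3"
    using order_tendstoD(2)[OF e, of "r / 3"] by (auto simp: eventually_sequentially)
  have "(\<lambda>n. \<Sum>m<M. f n m) \<longlonglongrightarrow> (\<Sum>m<M. l m)"
    by (intro tendsto_sum lim)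
  then have "eventually (\<lambda>n. dist (\<Sum>m<M. f n m) (\<Sum>m<M. l m) < r / 3) sequentially"
    using tendstoD[of _ _ _ "r / 3"] \<open>0 < r\<close> by simp
  then show "eventually (\<lambda>n. dist (s n) (suminf l) < r) sequentially"
  proof eventually_elim
    case (elim n)
    have "norm (s n - suminf l) \<le> e M + norm ((\<Sum>m<M. f n m) - (\<Sum>m<M. l m)) + e M"
      using remainder[of n M] summable_uniform_remainder(2)[OF lim remainder e, of M]
      by (intro norm_diff_triangle_le[of _ "\<Sum>m<M. l m"] norm_diff_triangle_le[of _ "\<Sum>m<M. f n m"])
        (simp_all add: norm_minus_commute)
    with elim M show ?case
      by (simp add: dist_norm)
  qed
qed

section \<open>Two series and their Riemann sums\<close>

definition log_tail :: "real \<Rightarrow> real \<Rightarrow> real" where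
  "log_tail a x = x powr (a - 2) * (- ln (1 - x) - x)"

definition geom_diff :: "real \<Rightarrow> real \<Rightarrow> real" where
  "geom_diff a x = (x powr a - 1) / (1 - x)"

lemma log_tail_sums:
  assumes "0 < x" "x < 1"
  shows "(\<lambda>m. x powr (real m + a) / (real m + 2)) sums log_tail a x"
proof -
  have "(\<lambda>n. - ((- (- x)) ^ n) / of_nat n) sums ln (1 + (- x))"
    by (rule ln_series') (use assms in auto)
  then have "(\<lambda>n. x ^ n / real n) sums (- ln (1 - x))"
    using sums_minus by fastforce
  then have "(\<lambda>m. x ^ (m + 2) / real (m + 2)) sums (- ln (1 - x) - (\<Sum>i<2. x ^ i / real i))"
    by (rule sums_split_initial_segment)
  then have "(\<lambda>m. x ^ (m + 2) / real (m + 2)) sums (- ln (1 - x) - x)"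
    by (simp add: eval_nat_numeral)
  then have "(\<lambda>m. x powr (a - 2) * (x ^ (m + 2) / real (m + 2))) sums log_tail a x"
    unfolding log_tail_def by (rule sums_mult)
  moreover have "x powr (a - 2) * (x ^ (m + 2) / real (m + 2)) = x powr (real m + a) / (real m + 2)" for m
  proof -
    have "x powr (a - 2) * x ^ (m + 2) = x powr (a - 2 + real (m + 2))"
      using assms by (simp only: powr_add powr_realpow)
    then show ?thesis by (simp add: add.commute)
  qed
  ultimately show ?thesis by simp
qed

lemma geom_diff_remainder:
  assumes "0 < x" "x < 1"
  shows "geom_diff a x - (\<Sum>m<M. x powr (real m + a) - x powr real m) = x ^ M * geom_diff a x"
proof -
  have "(\<Sum>m<M. x powr (real m + a) - x powr real m) = (x powr a - 1) * (\<Sum>m<M. x ^ m)"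
    using assms by (simp add: sum_distrib_left powr_add powr_realpow algebra_simps)
  also have "\<dots> = (x powr a - 1) * ((1 - x ^ M) / (1 - x))"
    using assms by (simp add: sum_gp_strict)
  finally show ?thesis
    using assms unfolding geom_diff_def by (simp add: field_simps)
qed

lemma geom_diff_remainder_bounds:
  assumes "0 < x" "x < 1" "-1 \<le> a" "a \<le> 0"
  shows "0 \<le> x ^ M * geom_diff a x" and "x ^ M * geom_diff a x \<le> x powr (real M + a)"
proof -
  have "1 \<le> x powr a"
    using powr_mono2'[of a x 1] assms by simp
  then show "0 \<le> x ^ M * geom_diff a x"
    using assms unfolding geom_diff_def by simp
  have "x powr a * x \<le> 1"
    using powr_le1[of "a + 1" x] assms by (simp add: powr_add)
  then have "geom_diff a x \<le> x powr a"
    using assms unfolding geom_diff_def by (simp add: field_simps)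
  then have "x ^ M * geom_diff a x \<le> x ^ M * x powr a"
    using assms by (intro mult_left_mono) auto
  also have "\<dots> = x powr (real M + a)"
    using assms by (simp add: powr_add powr_realpow)
  finally show "x ^ M * geom_diff a x \<le> x powr (real M + a)" .
qed

lemma riemann_sum_log_tail_sums:
  "(\<lambda>m. powr_riemann_sum (real m + a) n / (real m + 2))
     sums ((\<Sum>i\<in>{1..<n}. log_tail a (real i / real n)) / real n)"
proof -
  have "(\<lambda>m. \<Sum>i\<in>{1..<n}. (real i / real n) powr (real m + a) / (real m + 2))
      sums (\<Sum>i\<in>{1..<n}. log_tail a (real i / real n))"
    by (intro sums_sum log_tail_sums) auto
  then have "(\<lambda>m. (\<Sum>i\<in>{1..<n}. (real i / real n) powr (real m + a) / (real m + 2)) / real n)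
      sums ((\<Sum>i\<in>{1..<n}. log_tail a (real i / real n)) / real n)"
    by (rule sums_divide)
  moreover have "(\<Sum>i\<in>{1..<n}. (real i / real n) powr (real m + a) / (real m + 2)) / real n
      = powr_riemann_sum (real m + a) n / (real m + 2)" for m
    unfolding powr_riemann_sum_def by (simp add: sum_divide_distrib[symmetric])
  ultimately show ?thesis
    by simp
qed

lemma one_over_real_plus_tendsto_0: "(\<lambda>j. 1 / (real j + b)) \<longlonglongrightarrow> (0 :: real)"
proof -
  have "(\<lambda>j. 1 / (b + real j)) \<longlonglongrightarrow> 0"
    by (intro tendsto_divide_0[OF tendsto_const] filterlim_at_top_imp_at_infinity
        filterlim_tendsto_add_at_top[OF tendsto_const filterlim_real_sequentially])
  then show ?thesis
    by (simp add: add.commute)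
qed

lemma one_over_real_plus_telescope_sums:
  fixes b :: real
  shows "(\<lambda>j. 1 / (real j + b) - 1 / (real j + b + 1)) sums (1 / b)"
  using telescope_sums'[OF one_over_real_plus_tendsto_0[of b]] by (simp add: add_ac)

lemma riemann_sum_log_tail_remainder_bounds:
  assumes "-1 < a" "a \<le> 0"
  shows "0 \<le> (\<Sum>i\<in>{1..<n}. log_tail a (real i / real n)) / real n
              - (\<Sum>m<M. powr_riemann_sum (real m + a) n / (real m + 2))"
    and "(\<Sum>i\<in>{1..<n}. log_tail a (real i / real n)) / real n
              - (\<Sum>m<M. powr_riemann_sum (real m + a) n / (real m + 2)) \<le> 1 / (real M + a + 1)"
proof -
  have remainder: "(\<lambda>j. powr_riemann_sum (real (j + M) + a) n / (real (j + M) + 2)) sums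
      ((\<Sum>i\<in>{1..<n}. log_tail a (real i / real n)) / real n
        - (\<Sum>m<M. powr_riemann_sum (real m + a) n / (real m + 2)))"
    using sums_split_initial_segment[OF riemann_sum_log_tail_sums, of M] by simp
  show "0 \<le> (\<Sum>i\<in>{1..<n}. log_tail a (real i / real n)) / real n
              - (\<Sum>m<M. powr_riemann_sum (real m + a) n / (real m + 2))"
    by (rule sums_le[OF _ sums_zero remainder]) (simp add: powr_riemann_sum_nonneg)
  define b where "b = real M + a + 1"
  have "powr_riemann_sum (real (j + M) + a) n / (real (j + M) + 2) \<le> 1 / (real j + b) - 1 / (real j + b + 1)"
    for j
  proof -
    define y where "y = real (j + M)"
    have y: "0 \<le> y" "real j + b = y + a + 1"
      by (simp_all add: y_def b_def)
    have "powr_riemann_sum (y + a) n / (y + 2) \<le> 1 / (y + a + 1) / (y + 2)"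
      using powr_riemann_sum_le[of "y + a" n] assms y by (intro divide_right_mono) auto
    also have "\<dots> \<le> 1 / (y + a + 1) / (y + a + 2)"
      using assms y by (intro divide_left_mono) auto
    also have "\<dots> = 1 / (real j + b) - 1 / (real j + b + 1)"
      using assms y by (simp add: field_simps)
    finally show ?thesis
      unfolding y_def .
  qed
  moreover have "(\<lambda>j. 1 / (real j + b) - 1 / (real j + b + 1)) sums (1 / b)"
    by (rule one_over_real_plus_telescope_sums)
  ultimately show "(\<Sum>i\<in>{1..<n}. log_tail a (real i / real n)) / real n
              - (\<Sum>m<M. powr_riemann_sum (real m + a) n / (real m + 2)) \<le> 1 / (real M + a + 1)"
    unfolding b_def by (rule sums_le[OF _ remainder])
qed

lemma riemann_sum_geom_diff_remainder:
  "(\<Sum>i\<in>{1..<n}. geom_diff a (real i / real n)) / real n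
      - (\<Sum>m<M. powr_riemann_sum (real m + a) n - powr_riemann_sum (real m) n)
    = (\<Sum>i\<in>{1..<n}. (real i / real n) ^ M * geom_diff a (real i / real n)) / real n"
proof -
  have "(\<Sum>m<M. powr_riemann_sum (real m + a) n - powr_riemann_sum (real m) n)
      = (\<Sum>m<M. (\<Sum>i\<in>{1..<n}. (real i / real n) powr (real m + a) - (real i / real n) powr real m) / real n)"
    unfolding powr_riemann_sum_def by (simp add: sum_subtractf diff_divide_distrib)
  also have "\<dots> = (\<Sum>i\<in>{1..<n}. \<Sum>m<M. (real i / real n) powr (real m + a) - (real i / real n) powr real m) / real n"
    by (simp add: sum_divide_distrib[symmetric] sum.swap[of _ "{..<M}"])
  finally have swap: "(\<Sum>m<M. powr_riemann_sum (real m + a) n - powr_riemann_sum (real m) n)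
      = (\<Sum>i\<in>{1..<n}. \<Sum>m<M. (real i / real n) powr (real m + a) - (real i / real n) powr real m) / real n" .
  have "geom_diff a (real i / real n)
        - (\<Sum>m<M. (real i / real n) powr (real m + a) - (real i / real n) powr real m)
      = (real i / real n) ^ M * geom_diff a (real i / real n)" if "i \<in> {1..<n}" for i
    using that by (intro geom_diff_remainder) auto
  then have "(\<Sum>i\<in>{1..<n}. geom_diff a (real i / real n)
        - (\<Sum>m<M. (real i / real n) powr (real m + a) - (real i / real n) powr real m))
      = (\<Sum>i\<in>{1..<n}. (real i / real n) ^ M * geom_diff a (real i / real n))"
    by (rule sum.cong[OF refl])
  then show ?thesis
    unfolding swap diff_divide_distrib[symmetric] sum_subtractf[symmetric] by (rule arg_cong)
qed

lemma riemann_sum_geom_diff_remainder_bounds: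
  assumes "-1 < a" "a \<le> 0"
  shows "0 \<le> (\<Sum>i\<in>{1..<n}. geom_diff a (real i / real n)) / real n
              - (\<Sum>m<M. powr_riemann_sum (real m + a) n - powr_riemann_sum (real m) n)"
    and "(\<Sum>i\<in>{1..<n}. geom_diff a (real i / real n)) / real n
              - (\<Sum>m<M. powr_riemann_sum (real m + a) n - powr_riemann_sum (real m) n)
            \<le> 1 / (real M + a + 1)"
proof -
  have x: "0 < real i / real n" "real i / real n < 1" if "i \<in> {1..<n}" for i
    using that by auto
  show "0 \<le> (\<Sum>i\<in>{1..<n}. geom_diff a (real i / real n)) / real n
              - (\<Sum>m<M. powr_riemann_sum (real m + a) n - powr_riemann_sum (real m) n)"
    unfolding riemann_sum_geom_diff_remainder using geom_diff_remainder_bounds(1)[OF x] assms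
    by (intro divide_nonneg_nonneg sum_nonneg) auto
  have "(\<Sum>i\<in>{1..<n}. (real i / real n) ^ M * geom_diff a (real i / real n)) / real n
      \<le> powr_riemann_sum (real M + a) n"
    unfolding powr_riemann_sum_def using geom_diff_remainder_bounds(2)[OF x] assms
    by (intro divide_right_mono sum_mono) auto
  also have "\<dots> \<le> 1 / (real M + a + 1)"
    using powr_riemann_sum_le[of "real M + a" n] assms by simp
  finally show "(\<Sum>i\<in>{1..<n}. geom_diff a (real i / real n)) / real n
              - (\<Sum>m<M. powr_riemann_sum (real m + a) n - powr_riemann_sum (real m) n)
            \<le> 1 / (real M + a + 1)"
    unfolding riemann_sum_geom_diff_remainder .
qed

lemma riemann_sum_series_term_tendsto:
  assumes "-1 < a"
  shows "(\<lambda>n. powr_riemann_sum (real m + a) n / (real m + 2)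
             - (powr_riemann_sum (real m + a) n - powr_riemann_sum (real m) n))
           \<longlonglongrightarrow> 1 / real (Suc m) - real (Suc m) / ((real (Suc m) + 1) * (real (Suc m) + a))"
proof -
  have "(\<lambda>n. powr_riemann_sum (real m + a) n / (real m + 2)
          - (powr_riemann_sum (real m + a) n - powr_riemann_sum (real m) n))
      \<longlonglongrightarrow> 1 / (real m + a + 1) / (real m + 2) - (1 / (real m + a + 1) - 1 / (real m + 1))"
    using assms by (intro tendsto_intros powr_riemann_sum_tendsto) auto
  moreover have "1 / (real m + a + 1) / (real m + 2) - (1 / (real m + a + 1) - 1 / (real m + 1))
      = 1 / real (Suc m) - real (Suc m) / ((real (Suc m) + 1) * (real (Suc m) + a))"
  proof -
    define A where "A = real m + a + 1"
    have A: "A \<noteq> 0" "real (Suc m) + a = A" "real (Suc m) + 1 = real m + 2" "real m + 1 = real (Suc m)"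
      using assms by (simp_all add: A_def)
    have "1 / A / (real m + 2) - 1 / A = - (real (Suc m) / ((real m + 2) * A))"
      using A(1) by (simp add: divide_simps)
    then show ?thesis
      unfolding A_def[symmetric] A(2-4) by linarith
  qed
  ultimately show ?thesis
    by simp
qed

lemma riemann_sum_log_tail_minus_geom_diff_tendsto:
  assumes "-1 < a" "a \<le> 0"
  shows "summable (\<lambda>i. 1 / real (Suc i) - real (Suc i) / ((real (Suc i) + 1) * (real (Suc i) + a)))"
    and "(\<lambda>n. (\<Sum>i\<in>{1..<n}. log_tail a (real i / real n) - geom_diff a (real i / real n)) / real n)
           \<longlonglongrightarrow> (\<Sum>i. 1 / real (Suc i) - real (Suc i) / ((real (Suc i) + 1) * (real (Suc i) + a)))"
proof -
  define f where "f n m = powr_riemann_sum (real m + a) n / (real m + 2)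
      - (powr_riemann_sum (real m + a) n - powr_riemann_sum (real m) n)" for n m
  have lim: "(\<lambda>n. f n m)
      \<longlonglongrightarrow> 1 / real (Suc m) - real (Suc m) / ((real (Suc m) + 1) * (real (Suc m) + a))" for m
    unfolding f_def using assms(1) by (rule riemann_sum_series_term_tendsto)
  have "\<bar>(\<Sum>i\<in>{1..<n}. log_tail a (real i / real n) - geom_diff a (real i / real n)) / real n
      - (\<Sum>m<M. f n m)\<bar> \<le> 1 / (real M + a + 1)" for n M
    using riemann_sum_log_tail_remainder_bounds[OF assms, of n M]
      riemann_sum_geom_diff_remainder_bounds[OF assms, of n M]
    by (simp add: f_def sum_subtractf diff_divide_distrib abs_le_iff)
  then have remainder: "norm ((\<Sum>i\<in>{1..<n}. log_tail a (real i / real n) - geom_diff a (real i / real n)) / real n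
      - (\<Sum>m<M. f n m)) \<le> 1 / (real M + a + 1)" for n M
    by simp
  have "(\<lambda>M. 1 / (real M + a + 1)) \<longlonglongrightarrow> 0"
    using one_over_real_plus_tendsto_0[of "a + 1"] by (simp add: add.assoc)
  from summable_uniform_remainder(1)[OF lim remainder this] tendsto_suminf_uniform_remainder[OF lim remainder this]
  show "summable (\<lambda>i. 1 / real (Suc i) - real (Suc i) / ((real (Suc i) + 1) * (real (Suc i) + a)))"
    and "(\<lambda>n. (\<Sum>i\<in>{1..<n}. log_tail a (real i / real n) - geom_diff a (real i / real n)) / real n)
           \<longlonglongrightarrow> (\<Sum>i. 1 / real (Suc i) - real (Suc i) / ((real (Suc i) + 1) * (real (Suc i) + a)))"
    by blast+
qed

section \<open>The summand and the harmonic numbers\<close>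

definition log_excess :: "real \<Rightarrow> real \<Rightarrow> real" where
  "log_excess \<gamma> x = (x / (1 - x) - ln (1 + x / (1 - x))) * (1 / x) powr \<gamma>"

lemma ln_one_plus_ratio:
  fixes x :: real
  assumes "x < 1"
  shows "ln (1 + x / (1 - x)) = - ln (1 - x)"
proof -
  have "1 + x / (1 - x) = inverse (1 - x)"
    using assms by (simp add: field_simps)
  then show ?thesis
    using assms by (simp add: ln_inverse)
qed

lemma inverse_one_minus_sub_log_excess:
  assumes "0 < x" "x < 1"
  shows "1 / (1 - x) - log_excess \<gamma> x = log_tail (2 - \<gamma>) x - geom_diff (2 - \<gamma>) x"
proof -
  have "(1 / x) powr \<gamma> = x powr (2 - \<gamma> - 2)" and "x powr (2 - \<gamma>) = x\<^sup>2 * x powr (2 - \<gamma> - 2)"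
    using assms by (simp_all add: powr_divide powr_minus_divide powr_diff powr_numeral)
  then show ?thesis
    using assms unfolding log_excess_def log_tail_def geom_diff_def ln_one_plus_ratio[OF assms(2)]
    by (simp add: field_simps power2_eq_square)
qed

lemma log_excess_bounds:
  assumes "0 < x" "x \<le> 1 / 2"
  shows "0 \<le> log_excess \<gamma> x" and "log_excess \<gamma> x \<le> 2 * x powr (2 - \<gamma>)"
proof -
  have "ln (1 + x / (1 - x)) \<le> x / (1 - x)"
    using assms by (intro ln_add_one_self_le_self) auto
  then show "0 \<le> log_excess \<gamma> x"
    unfolding log_excess_def by simp
  have "ln (1 - x) \<le> - x"
    using assms by (intro ln_one_minus_pos_upper_bound) auto
  then have "x / (1 - x) - ln (1 + x / (1 - x)) \<le> x / (1 - x) - x"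
    using ln_one_plus_ratio[of x] assms by simp
  also have "\<dots> = x\<^sup>2 / (1 - x)"
    using assms by (simp add: field_simps power2_eq_square)
  also have "\<dots> \<le> 2 * x\<^sup>2"
    using assms by (simp add: field_simps)
  finally have "log_excess \<gamma> x \<le> 2 * x\<^sup>2 * (1 / x) powr \<gamma>"
    unfolding log_excess_def by (rule mult_right_mono) simp
  also have "2 * x\<^sup>2 * (1 / x) powr \<gamma> = 2 * x powr (2 - \<gamma>)"
    using assms by (simp add: powr_diff powr_divide powr_numeral)
  finally show "log_excess \<gamma> x \<le> 2 * x powr (2 - \<gamma>)" .
qed

lemma harm_eq_inverse_plus_sum_reversed:
  "(harm n :: real) = 1 / real n + (\<Sum>i\<in>{1..<n}. 1 / (real n - real i))"
proof (cases n)
  case (Suc m)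
  have "(\<Sum>i\<in>{1..<n}. 1 / (real n - real i)) = (\<Sum>i\<in>{1..m}. 1 / (real (Suc m) - real i))"
    by (simp add: Suc atLeastLessThanSuc_atLeastAtMost)
  also have "\<dots> = (\<Sum>i\<in>{1..m}. 1 / (real (Suc m) - real (m + 1 - i)))"
    by (rule sum.atLeastAtMost_rev)
  also have "\<dots> = harm m"
    by (auto simp: harm_def of_nat_diff divide_inverse intro!: sum.cong)
  finally show ?thesis
    by (simp add: Suc harm_Suc divide_inverse)
qed (simp add: harm_def)

lemma harm_minus_sum_log_excess:
  assumes "k \<le> n" "0 < n"
  shows "harm n - (\<Sum>i = k..n - 1. log_excess \<gamma> (real i / real n) / real n)
    = 1 / real n
      + (\<Sum>i\<in>{1..<n}. log_tail (2 - \<gamma>) (real i / real n) - geom_diff (2 - \<gamma>) (real i / real n)) / real n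
      + (\<Sum>i\<in>{1..<k}. log_excess \<gamma> (real i / real n)) / real n"
proof -
  define g where "g i = log_excess \<gamma> (real i / real n) / real n" for i
  \<comment> \<open>The term \<open>i = 0\<close>, present when \<open>k = 0\<close>, vanishes since \<open>1 / 0 = 0\<close>.\<close>
  have g0: "g 0 = 0"
    by (simp add: g_def log_excess_def)
  have from_1: "(\<Sum>i\<in>{1..<m}. g i) = (\<Sum>i\<in>{0..<m}. g i)" for m
    using sum_shift_lb_Suc0_0_upt[of g] g0 by simp
  have "(\<Sum>i = k..n - 1. g i) = (\<Sum>i\<in>{k..<n}. g i)"
    using assms by (cases n) (auto simp: atLeastLessThanSuc_atLeastAtMost)
  also have "\<dots> = (\<Sum>i\<in>{1..<n}. g i) - (\<Sum>i\<in>{1..<k}. g i)"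
    using sum.atLeastLessThan_concat[of 0 k n g] assms unfolding from_1 by simp
  finally have cut: "(\<Sum>i = k..n - 1. g i) = (\<Sum>i\<in>{1..<n}. g i) - (\<Sum>i\<in>{1..<k}. g i)" .
  have "1 / (real n - real i) - g i
      = (log_tail (2 - \<gamma>) (real i / real n) - geom_diff (2 - \<gamma>) (real i / real n)) / real n"
    if "i \<in> {1..<n}" for i
  proof -
    define x where "x = real i / real n"
    have x: "0 < x" "x < 1"
      using that by (auto simp: x_def)
    have "1 / (real n - real i) = 1 / (1 - x) / real n"
      using that by (simp add: x_def field_simps)
    then have "1 / (real n - real i) - g i = (1 / (1 - x) - log_excess \<gamma> x) / real n"
      by (simp add: g_def x_def diff_divide_distrib)
    then show ?thesis
      using inverse_one_minus_sub_log_excess[OF x, of \<gamma>] by (simp add: x_def)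
  qed
  then have "(\<Sum>i\<in>{1..<n}. 1 / (real n - real i)) - (\<Sum>i\<in>{1..<n}. g i)
      = (\<Sum>i\<in>{1..<n}. log_tail (2 - \<gamma>) (real i / real n) - geom_diff (2 - \<gamma>) (real i / real n)) / real n"
    by (simp add: sum_subtractf[symmetric] sum_divide_distrib)
  then show ?thesis
    using cut harm_eq_inverse_plus_sum_reversed[of n]
    by (simp add: g_def sum_divide_distrib[symmetric])
qed

lemma sum_log_excess_cutoff_tendsto_0:
  fixes k :: "nat \<Rightarrow> nat"
  assumes "\<gamma> < 3" and k: "(\<lambda>n. real (k n) / real n) \<longlonglongrightarrow> 0"
  shows "(\<lambda>n. (\<Sum>i\<in>{1..<k n}. log_excess \<gamma> (real i / real n)) / real n) \<longlonglongrightarrow> 0"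
proof (rule tendsto_sandwich)
  have "eventually (\<lambda>n. real (k n) / real n < 1 / 2) sequentially"
    using order_tendstoD(2)[OF k, of "1 / 2"] by simp
  then have small: "eventually (\<lambda>n. 0 < n \<and> real (k n) / real n \<le> 1 / 2) sequentially"
    using eventually_gt_at_top[of 0] by eventually_elim simp
  have x: "0 < real i / real n \<and> real i / real n \<le> 1 / 2"
    if "0 < n" "real (k n) / real n \<le> 1 / 2" "i \<in> {1..<k n}" for n i
  proof -
    have "real i / real n \<le> real (k n) / real n"
      using that by (intro divide_right_mono) auto
    then show ?thesis
      using that by auto
  qed
  show "eventually (\<lambda>n. 0 \<le> (\<Sum>i\<in>{1..<k n}. log_excess \<gamma> (real i / real n)) / real n) sequentially"
    using small by eventually_elim (auto intro!: divide_nonneg_nonneg sum_nonneg log_excess_bounds(1) dest: x)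
  show "eventually (\<lambda>n. (\<Sum>i\<in>{1..<k n}. log_excess \<gamma> (real i / real n)) / real n
      \<le> 2 * ((real (k n) / real n) powr (3 - \<gamma>) / (3 - \<gamma>))) sequentially"
    using small
  proof eventually_elim
    case (elim n)
    have "log_excess \<gamma> (real i / real n) \<le> 2 * (real i / real n) powr (2 - \<gamma>)"
      if "i \<in> {1..<k n}" for i
      using x[OF _ _ that] elim by (intro log_excess_bounds(2)) auto
    then have "(\<Sum>i\<in>{1..<k n}. log_excess \<gamma> (real i / real n)) / real n
        \<le> (\<Sum>i\<in>{1..<k n}. 2 * (real i / real n) powr (2 - \<gamma>)) / real n"
      by (intro divide_right_mono sum_mono) auto
    also have "\<dots> = 2 * ((\<Sum>i\<in>{1..<k n}. (real i / real n) powr (2 - \<gamma>)) / real n)"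
      by (simp add: sum_distrib_left)
    also have "\<dots> \<le> 2 * ((real (k n) / real n) powr (3 - \<gamma>) / (3 - \<gamma>))"
      using partial_riemann_sum_powr_le[where p = "2 - \<gamma>" and K = "k n" and n = n] assms by simp
    finally show ?case .
  qed
  have "(\<lambda>n. (real (k n) / real n) powr (3 - \<gamma>)) \<longlonglongrightarrow> 0"
    using assms by (intro tendsto_zero_powrI[OF k tendsto_const]) auto
  then show "(\<lambda>n. 2 * ((real (k n) / real n) powr (3 - \<gamma>) / (3 - \<gamma>))) \<longlonglongrightarrow> 0"
    by (intro tendsto_mult_right_zero tendsto_divide_zero)
qed simp

theorem lemma2p1:
  fixes \<gamma> :: real and k :: "nat \<Rightarrow> nat"
  assumes "2 < \<gamma>" and "\<gamma> < 3"
    and "(\<lambda>n. real (k n)) \<in> o(\<lambda>n. real n)"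
  shows "summable (\<lambda>i. 1 / real (Suc i) - real (Suc i) / ((real (Suc i) + 1) * (real (Suc i) + 2 - \<gamma>)))
    \<and> (\<lambda>n. (harm n :: real)
         - (\<Sum>i = k n..n - 1.
              ((real i / real n) / (1 - real i / real n)
                 - ln (1 + (real i / real n) / (1 - real i / real n)))
              * (real n / real i) powr \<gamma> * (1 / real n)))
      \<longlonglongrightarrow> (\<Sum>i. 1 / real (Suc i) - real (Suc i) / ((real (Suc i) + 1) * (real (Suc i) + 2 - \<gamma>)))"
proof -
  have a: "-1 < 2 - \<gamma>" "2 - \<gamma> \<le> 0"
    using assms by auto
  have shift: "real (Suc i) + (2 - \<gamma>) = real (Suc i) + 2 - \<gamma>" for i
    by simp
  note riemann = riemann_sum_log_tail_minus_geom_diff_tendsto[OF a, unfolded shift]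
  have k: "(\<lambda>n. real (k n) / real n) \<longlonglongrightarrow> 0"
    using smalloD_tendsto[OF assms(3)] by simp
  have "eventually (\<lambda>n. real (k n) / real n < 1) sequentially"
    using order_tendstoD(2)[OF k, of 1] by simp
  then have "eventually (\<lambda>n. harm n - (\<Sum>i = k n..n - 1. log_excess \<gamma> (real i / real n) / real n)
      = 1 / real n
        + (\<Sum>i\<in>{1..<n}. log_tail (2 - \<gamma>) (real i / real n) - geom_diff (2 - \<gamma>) (real i / real n)) / real n
        + (\<Sum>i\<in>{1..<k n}. log_excess \<gamma> (real i / real n)) / real n) sequentially"
    using eventually_gt_at_top[of 0]
    by eventually_elim (intro harm_minus_sum_log_excess, simp_all add: field_simps)
  moreover have "(\<lambda>n. 1 / real n
        + (\<Sum>i\<in>{1..<n}. log_tail (2 - \<gamma>) (real i / real n) - geom_diff (2 - \<gamma>) (real i / real n)) / real n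
        + (\<Sum>i\<in>{1..<k n}. log_excess \<gamma> (real i / real n)) / real n)
      \<longlonglongrightarrow> 0 + (\<Sum>i. 1 / real (Suc i) - real (Suc i) / ((real (Suc i) + 1) * (real (Suc i) + 2 - \<gamma>))) + 0"
    by (intro tendsto_add lim_inverse_n' riemann(2) sum_log_excess_cutoff_tendsto_0[OF assms(2) k])
  ultimately have "(\<lambda>n. harm n - (\<Sum>i = k n..n - 1. log_excess \<gamma> (real i / real n) / real n))
      \<longlonglongrightarrow> (\<Sum>i. 1 / real (Suc i) - real (Suc i) / ((real (Suc i) + 1) * (real (Suc i) + 2 - \<gamma>)))"
    by (simp add: tendsto_cong)
  then show ?thesis
    using riemann(1) by (simp add: log_excess_def)
qed

end
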